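(* Let $m,\ell,\ell',t$ be positive integers with $m\ge t\ell+\ell'$, let $a>0$, and set $\varepsilon=\frac{2a+\sqrt{8\ln 2}}{\sqrt t}$. Let $\mathcal G\subset\binom{[m]}{\ell}$ and $\alpha:=|\mathcal G|/\binom{m}{\ell}$. Let $H$ be a uniformly random element of $\binom{[m]}{\ell'}$. Then $$\mathsf P\Big[\,|\mathcal G(\overline H)|<(\alpha-\varepsilon)\binom{m-\ell'}{\ell}\Big]<2e^{-a^2/2}.$$
   Context: $[m]=\{1,\dots,m\}$; $\binom{[m]}{\ell}$ is the family of all $\ell$-element subsets of $[m]$. For a family $\mathcal G$ and a set $H$, $\mathcal G(\overline H):=\{G\in\mathcal G: G\cap H=\varnothing\}$. $\ln$ is the natural logarithm. *)

theory Defs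
  imports "HOL-Probability.Probability"
begin

definition ksubsets :: "nat \<Rightarrow> nat \<Rightarrow> nat set set" where
  "ksubsets m l = {S. S \<subseteq> {1..m} \<and> card S = l}"

definition avoiding :: "'a set set \<Rightarrow> 'a set \<Rightarrow> 'a set set" where
  "avoiding G H = {F \<in> G. F \<inter> H = {}}"

definition unif_prob :: "'a set \<Rightarrow> ('a \<Rightarrow> bool) \<Rightarrow> real" where
  "unif_prob \<Omega> P = measure_pmf.prob (pmf_of_set \<Omega>) {H. P H}"

end

theory Submission
  imports Defs
begin

text \<open>
  Write d(R) for the fraction of the l-subsets of R that belong to G. Deleting a uniformly random
  point h from an n-set R does not change the mean of d, the decrement d(R) - d(R - {h}) is at most
  l/(n - l), and by double counting and Cauchy-Schwarz its second moment is at most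
  l/((n - l)(n - 1)). Together with exp x \<le> 1 + x + x^2 this bounds the exponential moment of
  one deletion; deleting the points of H one at a time the bounds telescope to
  E exp(-\<theta> d([m] - H)) \<le> exp(-\<theta> d([m]) + \<theta>^2 (l/(m - l' - l) - l/(m - l))),
  and Markov's inequality with \<theta> = a sqrt t gives the tail bound exp(-a^2/2).
\<close>

section \<open>Subsets of a fixed size\<close>

definition subsets_of_size :: "'a set \<Rightarrow> nat \<Rightarrow> 'a set set" where
  "subsets_of_size R k = {K. K \<subseteq> R \<and> card K = k}"

lemma finite_subsets_of_size [simp]: "finite R \<Longrightarrow> finite (subsets_of_size R k)"
  unfolding subsets_of_size_def by (rule finite_subset[of _ "Pow R"]) auto

lemma card_subsets_of_size: "finite R \<Longrightarrow> card (subsets_of_size R k) = card R choose k"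
  unfolding subsets_of_size_def by (rule n_subsets)

lemma card_subsets_of_size_containing:
  assumes "finite R" "h \<in> R"
  shows "real (card {F \<in> subsets_of_size R l. h \<in> F})
           = real (card R choose l) - real ((card R - 1) choose l)"
proof -
  let ?A = "{F \<in> subsets_of_size R l. h \<in> F}" and ?B = "subsets_of_size (R - {h}) l"
  have "subsets_of_size R l = ?A \<union> ?B"
    by (auto simp: subsets_of_size_def)
  moreover have "card (?A \<union> ?B) = card ?A + card ?B"
    using assms(1) by (intro card_Un_disjoint) (auto simp: subsets_of_size_def)
  moreover have "card ?B = (card R - 1) choose l"
    using assms by (simp add: card_subsets_of_size card_Diff_singleton)
  ultimately have "card R choose l = card ?A + ((card R - 1) choose l)"
    using card_subsets_of_size[OF assms(1), of l] by argo
  then show ?thesis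
    by simp
qed

lemma card_subsets_of_size_containing_two:
  assumes "finite R" "h \<in> R" "h' \<in> R" "h \<noteq> h'"
  shows "real (card {F \<in> subsets_of_size R l. h \<in> F \<and> h' \<in> F})
           = real (card R choose l) - 2 * real ((card R - 1) choose l) + real ((card R - 2) choose l)"
proof -
  let ?A = "{F \<in> subsets_of_size R l. h \<in> F \<and> h' \<in> F}"
    and ?B = "{F \<in> subsets_of_size (R - {h'}) l. h \<in> F}"
  have "{F \<in> subsets_of_size R l. h \<in> F} = ?A \<union> ?B" "?A \<inter> ?B = {}"
    by (auto simp: subsets_of_size_def)
  moreover have "finite ?A" "finite ?B"
    using assms(1) by simp_all
  ultimately have "card {F \<in> subsets_of_size R l. h \<in> F} = card ?A + card ?B"
    by (metis card_Un_disjoint)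
  moreover have "card (R - {h'}) - 1 = card R - 2"
    using assms by (simp add: card_Diff_singleton)
  ultimately show ?thesis
    using card_subsets_of_size_containing[of R h l] card_subsets_of_size_containing[of "R - {h'}" h l] assms
    by (simp add: card_Diff_singleton)
qed

lemma sum_sum_incidence:
  fixes f :: "'b \<Rightarrow> 'c::comm_semiring_1"
  assumes "finite A" "finite U" "\<And>F. F \<in> A \<Longrightarrow> \<phi> F \<subseteq> U"
  shows "(\<Sum>F\<in>A. \<Sum>x\<in>\<phi> F. f x) = (\<Sum>x\<in>U. of_nat (card {F \<in> A. x \<in> \<phi> F}) * f x)"
proof -
  have "(\<Sum>F\<in>A. \<Sum>x\<in>\<phi> F. f x) = (\<Sum>F\<in>A. \<Sum>x\<in>{x \<in> U. x \<in> \<phi> F}. f x)"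
    using assms(3) by (intro sum.cong refl arg_cong[where f = "sum f"]) blast
  also have "\<dots> = (\<Sum>x\<in>U. \<Sum>F\<in>{F \<in> A. x \<in> \<phi> F}. f x)"
    using assms(1,2) by (rule sum.swap_restrict)
  finally show ?thesis by simp
qed

lemma sum_degree:
  assumes "finite R" "A \<subseteq> subsets_of_size R l"
  shows "(\<Sum>h\<in>R. real (card {F \<in> A. h \<in> F})) = real l * real (card A)"
proof -
  have "finite A"
    using finite_subset[OF assms(2)] assms(1) by simp
  then have "(\<Sum>F\<in>A. \<Sum>h\<in>F. 1::real) = (\<Sum>h\<in>R. real (card {F \<in> A. h \<in> F}) * 1)"
    using assms by (intro sum_sum_incidence) (auto simp: subsets_of_size_def)
  moreover have "(\<Sum>h\<in>F. 1::real) = real l" if "F \<in> A" for F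
    using that assms by (auto simp: subsets_of_size_def)
  ultimately show ?thesis
    by (simp add: mult.commute)
qed

lemma sum_square_sum_subsets_of_size:
  fixes g :: "'a \<Rightarrow> real"
  assumes R: "finite R" and centered: "(\<Sum>h\<in>R. g h) = 0"
  shows "(\<Sum>F\<in>subsets_of_size R l. (\<Sum>h\<in>F. g h)^2)
           = (real ((card R - 1) choose l) - real ((card R - 2) choose l)) * (\<Sum>h\<in>R. (g h)^2)"
proof -
  let ?S = "subsets_of_size R l"
  define p where "p = real (card R choose l) - real ((card R - 1) choose l)"
  define q where "q = real ((card R - 1) choose l) - real ((card R - 2) choose l)"
  have diagonal: "real (card {F \<in> ?S. h \<in> F}) = p" if "h \<in> R" for h
    using card_subsets_of_size_containing[OF R that] by (simp add: p_def)
  have off_diagonal: "real (card {F \<in> ?S. h \<in> F \<and> h' \<in> F}) = p - q"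
    if "h \<in> R" "h' \<in> R" "h \<noteq> h'" for h h'
    using card_subsets_of_size_containing_two[OF R that] by (simp add: p_def q_def)
  have "(\<Sum>F\<in>?S. (\<Sum>h\<in>F. g h)^2) = (\<Sum>F\<in>?S. \<Sum>z\<in>F \<times> F. g (fst z) * g (snd z))"
    by (simp add: power2_eq_square sum_product sum.cartesian_product case_prod_beta)
  also have "\<dots> = (\<Sum>z\<in>R \<times> R. real (card {F \<in> ?S. z \<in> F \<times> F}) * (g (fst z) * g (snd z)))"
    using R by (intro sum_sum_incidence) (auto simp: subsets_of_size_def)
  also have "\<dots> = (\<Sum>h\<in>R. \<Sum>h'\<in>R. ((p - q) + (if h = h' then q else 0)) * (g h * g h'))"
    unfolding sum.cartesian_product by (intro sum.cong refl) (auto simp: diagonal off_diagonal)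
  also have "\<dots> = (\<Sum>h\<in>R. (p - q) * (g h * (\<Sum>h'\<in>R. g h')) + q * (g h)^2)"
  proof (intro sum.cong refl)
    fix h assume h: "h \<in> R"
    have "(\<Sum>h'\<in>R. (if h = h' then q else 0) * (g h * g h'))
        = (\<Sum>h'\<in>R. if h = h' then q * (g h * g h') else 0)"
      by (intro sum.cong) auto
    also have "\<dots> = q * (g h)^2"
      using R h by (simp add: power2_eq_square)
    finally show "(\<Sum>h'\<in>R. (p - q + (if h = h' then q else 0)) * (g h * g h'))
        = (p - q) * (g h * (\<Sum>h'\<in>R. g h')) + q * (g h)^2"
      by (simp add: distrib_right sum.distrib sum_distrib_left)
  qed
  also have "\<dots> = (p - q) * (\<Sum>h\<in>R. g h)^2 + q * (\<Sum>h\<in>R. (g h)^2)"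
    by (simp add: sum.distrib sum_distrib_left[symmetric] sum_distrib_right[symmetric] power2_eq_square)
  finally show ?thesis
    by (simp add: centered q_def)
qed

lemma degree_variance_le:
  fixes A :: "'a set set"
  assumes R: "finite R" "card R > 0" and A: "A \<subseteq> subsets_of_size R l"
  shows "(\<Sum>h\<in>R. (real (card {F \<in> A. h \<in> F}) - real l * real (card A) / real (card R))^2)
           \<le> real (card A) * (real ((card R - 1) choose l) - real ((card R - 2) choose l))"
proof -
  define k where "k = real l * real (card A) / real (card R)"
  define g where "g h = real (card {F \<in> A. h \<in> F}) - k" for h
  define q where "q = real ((card R - 1) choose l) - real ((card R - 2) choose l)"
  define S where "S = (\<Sum>h\<in>R. (g h)^2)"
  have "finite A"
    using finite_subset[OF A] R(1) by simp
  have centered: "(\<Sum>h\<in>R. g h) = 0"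
    using sum_degree[OF R(1) A] R(2) by (simp add: g_def k_def sum_subtractf)
  have "(g h)^2 = real (card {F \<in> A. h \<in> F}) * g h - k * g h" for h
    by (simp add: g_def power2_eq_square algebra_simps)
  then have "S = (\<Sum>h\<in>R. real (card {F \<in> A. h \<in> F}) * g h) - k * (\<Sum>h\<in>R. g h)"
    by (simp add: S_def sum_subtractf sum_distrib_left)
  then have "S = (\<Sum>h\<in>R. real (card {F \<in> A. h \<in> F}) * g h)"
    by (simp add: centered)
  also have "\<dots> = (\<Sum>F\<in>A. \<Sum>h\<in>F. g h)"
    using \<open>finite A\<close> R(1) A by (intro sum_sum_incidence[symmetric]) (auto simp: subsets_of_size_def)
  finally have "S^2 = (\<Sum>F\<in>A. \<Sum>h\<in>F. g h)^2"
    by simp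
  also have "\<dots> \<le> (\<Sum>F\<in>A. (\<Sum>h\<in>F. g h)^2) * real (card A)"
    by (rule sum_squared_le_sum_of_squares)
  also have "\<dots> \<le> (\<Sum>F\<in>subsets_of_size R l. (\<Sum>h\<in>F. g h)^2) * real (card A)"
    using R(1) A by (intro mult_right_mono sum_mono2) auto
  also have "\<dots> = S * (q * real (card A))"
    using sum_square_sum_subsets_of_size[OF R(1) centered, of l] by (simp add: S_def q_def)
  finally have square_le: "S * S \<le> S * (q * real (card A))"
    by (simp add: power2_eq_square)
  have "S \<ge> 0" "q \<ge> 0"
    by (simp_all add: S_def q_def sum_nonneg binomial_right_mono)
  then have "S \<le> q * real (card A)"
    using square_le by (cases "S = 0") (simp_all add: mult_le_cancel_left_pos)
  then show ?thesis
    by (simp add: S_def g_def k_def q_def mult.commute)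
qed

section \<open>Density of a family\<close>

definition family_density :: "'a set set \<Rightarrow> nat \<Rightarrow> 'a set \<Rightarrow> real" where
  "family_density G l R = real (card (G \<inter> subsets_of_size R l)) / real (card R choose l)"

lemma family_density_nonneg: "family_density G l R \<ge> 0"
  by (simp add: family_density_def)

lemma family_density_le_1: "finite R \<Longrightarrow> family_density G l R \<le> 1"
  unfolding family_density_def card_subsets_of_size[symmetric]
  by (simp add: divide_le_eq_1 card_mono card_gt_0_iff)

lemma real_binomial_absorb_comp:
  "(real n - real l) * real (n choose l) = real n * real ((n - 1) choose l)"
proof (cases "l \<le> n")
  case True
  then show ?thesis
    using binomial_absorb_comp[of n l] by (metis of_nat_diff of_nat_mult)
next
  case False
  then show ?thesis
    by (simp add: binomial_eq_0)
qed

lemma real_binomial_diff_pred: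
  assumes "l + 2 \<le> n"
  shows "real ((n - 1) choose l) - real ((n - 2) choose l)
           = real l * (real n - real l) * real (n choose l) / (real n * (real n - 1))"
proof -
  have "(real n - 1 - real l) * real ((n - 1) choose l) = (real n - 1) * real ((n - 2) choose l)"
    using real_binomial_absorb_comp[of "n - 1" l] assms by (simp add: of_nat_diff numeral_2_eq_2)
  then have "(real n - 1) * (real ((n - 1) choose l) - real ((n - 2) choose l)) = real l * real ((n - 1) choose l)"
    by (simp add: algebra_simps)
  then have "real n * (real n - 1) * (real ((n - 1) choose l) - real ((n - 2) choose l))
      = real l * (real n * real ((n - 1) choose l))"
    by (simp add: mult.assoc mult.left_commute)
  also have "\<dots> = real l * (real n - real l) * real (n choose l)"
    using real_binomial_absorb_comp[of n l] by simp
  finally show ?thesis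
    using assms by (simp add: eq_divide_eq mult.commute)
qed

lemma family_density_remove_point:
  fixes G :: "'a set set"
  assumes R: "finite R" "h \<in> R" "l < card R"
  defines "A \<equiv> G \<inter> subsets_of_size R l"
  shows "family_density G l R - family_density G l (R - {h})
           = (real (card R) * real (card {F \<in> A. h \<in> F}) - real l * real (card A))
             / ((real (card R) - real l) * real (card R choose l))"
proof -
  define n where "n = card R"
  have "A = (G \<inter> subsets_of_size (R - {h}) l) \<union> {F \<in> A. h \<in> F}"
    by (auto simp: A_def subsets_of_size_def)
  moreover have "card ((G \<inter> subsets_of_size (R - {h}) l) \<union> {F \<in> A. h \<in> F})
      = card (G \<inter> subsets_of_size (R - {h}) l) + card {F \<in> A. h \<in> F}"
    using R(1) by (intro card_Un_disjoint) (auto simp: A_def subsets_of_size_def)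
  ultimately have removed: "real (card (G \<inter> subsets_of_size (R - {h}) l)) = real (card A) - real (card {F \<in> A. h \<in> F})"
    by simp
  have absorb: "real ((n - 1) choose l) = (real n - real l) * real (n choose l) / real n"
    using real_binomial_absorb_comp[of n l] R(3) by (simp add: n_def field_simps)
  have "real n > real l" "real (n choose l) > 0"
    using R(3) by (simp_all add: n_def)
  moreover have "N / B - (N - c) / ((n' - l') * B / n') = (n' * c - l' * N) / ((n' - l') * B)"
    if "n' > l'" "B > 0" for N c n' l' B :: real
    using that by (simp add: field_simps)
  ultimately show ?thesis
    using R removed absorb
    by (simp add: family_density_def A_def n_def[symmetric] card_Diff_singleton)
qed

lemma sum_family_density_remove_point:
  assumes R: "finite R" "l < card R"
  shows "(\<Sum>h\<in>R. family_density G l (R - {h})) = real (card R) * family_density G l R"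
proof -
  let ?A = "G \<inter> subsets_of_size R l"
  have "(\<Sum>h\<in>R. family_density G l R - family_density G l (R - {h}))
      = (\<Sum>h\<in>R. real (card R) * real (card {F \<in> ?A. h \<in> F}) - real l * real (card ?A))
        / ((real (card R) - real l) * real (card R choose l))"
    unfolding sum_divide_distrib using R
    by (intro sum.cong refl) (simp add: family_density_remove_point)
  also have "\<dots> = 0"
    using sum_degree[OF R(1), of ?A l]
    by (simp add: sum_subtractf sum_distrib_left[symmetric] mult_ac)
  finally show ?thesis
    by (simp add: sum_subtractf)
qed

lemma family_density_remove_point_le:
  assumes R: "finite R" "h \<in> R" "l < card R"
  shows "family_density G l R - family_density G l (R - {h}) \<le> real l / (real (card R) - real l)"
proof -
  define n where "n = card R"
  define B where "B = n choose l"
  let ?A = "G \<inter> subsets_of_size R l"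
  have "real (card {F \<in> ?A. h \<in> F}) \<le> real (card {F \<in> subsets_of_size R l. h \<in> F})"
    using R(1) by (intro of_nat_mono card_mono) auto
  also have "\<dots> = real B - real ((n - 1) choose l)"
    using card_subsets_of_size_containing[OF R(1,2), of l] by (simp add: n_def B_def)
  finally have "real n * real (card {F \<in> ?A. h \<in> F}) \<le> real n * (real B - real ((n - 1) choose l))"
    by (intro mult_left_mono) simp_all
  also have "\<dots> = real l * real B"
    using real_binomial_absorb_comp[of n l] by (simp add: B_def algebra_simps)
  finally have "real n * real (card {F \<in> ?A. h \<in> F}) - real l * real (card ?A) \<le> real l * real B"
    using mult_nonneg_nonneg[of "real l" "real (card ?A)"] by linarith
  moreover have "real n - real l > 0" "real B > 0"
    using R(3) by (simp_all add: n_def B_def)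
  ultimately have "(real n * real (card {F \<in> ?A. h \<in> F}) - real l * real (card ?A)) / ((real n - real l) * real B)
      \<le> real l * real B / ((real n - real l) * real B)"
    by (intro divide_right_mono) simp_all
  also have "\<dots> = real l / (real n - real l)"
    using \<open>real B > 0\<close> by simp
  finally show ?thesis
    using R by (simp add: family_density_remove_point n_def B_def)
qed

lemma sum_square_family_density_remove_point_le:
  assumes R: "finite R" "l + 2 \<le> card R"
  shows "(\<Sum>h\<in>R. (family_density G l R - family_density G l (R - {h}))^2)
           \<le> real (card R) * real l / ((real (card R) - real l) * (real (card R) - 1))"
proof -
  define n where "n = card R"
  define B where "B = n choose l"
  define b where "b = (n - 1) choose l"
  define b' where "b' = (n - 2) choose l"
  let ?A = "G \<inter> subsets_of_size R l"
  define \<kappa> where "\<kappa> = real n / ((real n - real l) * real B)"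
  define g where "g h = real (card {F \<in> ?A. h \<in> F}) - real l * real (card ?A) / real n" for h
  have pos: "real n - real l > 0" "real B > 0" "real n - 1 > 0"
    using R(2) by (simp_all add: n_def B_def)
  have "family_density G l R - family_density G l (R - {h}) = \<kappa> * g h" if "h \<in> R" for h
  proof -
    have "real n * real (card {F \<in> ?A. h \<in> F}) - real l * real (card ?A) = real n * g h"
      using pos by (simp add: g_def right_diff_distrib)
    then show ?thesis
      using family_density_remove_point[OF R(1) that] R(2)
      by (simp add: \<kappa>_def n_def B_def)
  qed
  then have "(\<Sum>h\<in>R. (family_density G l R - family_density G l (R - {h}))^2) = \<kappa>^2 * (\<Sum>h\<in>R. (g h)^2)"
    by (simp add: power_mult_distrib sum_distrib_left)
  also have "\<dots> \<le> \<kappa>^2 * (real (card ?A) * (real b - real b'))"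
    using degree_variance_le[OF R(1) _ Int_lower2[of G "subsets_of_size R l"]] R(2)
    by (intro mult_left_mono) (simp_all add: g_def n_def b_def b'_def)
  also have "\<dots> \<le> \<kappa>^2 * (real B * (real b - real b'))"
  proof (intro mult_left_mono)
    have "card ?A \<le> B"
      using card_mono[OF finite_subsets_of_size[OF R(1)] Int_lower2[of G]]
      by (simp add: B_def n_def card_subsets_of_size R(1))
    moreover have "b' \<le> b"
      by (simp add: b_def b'_def binomial_right_mono)
    ultimately show "real (card ?A) * (real b - real b') \<le> real B * (real b - real b')"
      by (intro mult_right_mono) simp_all
  qed simp
  also have "\<dots> = real n * real l / ((real n - real l) * (real n - 1))"
  proof -
    have "real b - real b' = real l * (real n - real l) * real B / (real n * (real n - 1))"
      using real_binomial_diff_pred[OF R(2)] by (simp add: n_def b_def b'_def B_def)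
    moreover have "(n' / (d * B'))^2 * (B' * (l' * d * B' / (n' * e))) = n' * l' / (d * e)"
      if "n' \<noteq> 0" "d \<noteq> 0" "e \<noteq> 0" "B' \<noteq> 0" for n' d e B' l' :: real
      using that by (simp add: field_simps power2_eq_square)
    ultimately show ?thesis
      using pos by (simp add: \<kappa>_def)
  qed
  finally show ?thesis
    by (simp add: n_def)
qed

section \<open>Exponential moments\<close>

lemma exp_le_one_plus_x_plus_square:
  fixes x :: real
  assumes "x \<le> 1"
  shows "exp x \<le> 1 + x + x^2"
proof (cases "x \<ge> 0")
  case True
  then show ?thesis
    using exp_bound[OF True assms] by simp
next
  case False
  have "exp x * (1 - x) \<le> exp x * exp (- x)"
    using exp_ge_add_one_self[of "- x"] by (intro mult_left_mono) simp_all
  also have "\<dots> = 1"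
    by (simp add: exp_minus)
  also have "\<dots> \<le> (1 + x + x^2) * (1 - x)"
    using mult_nonpos_nonneg[of x "x * x"] False
    by (simp add: algebra_simps power2_eq_square)
  finally show ?thesis
    using False by (simp add: mult_le_cancel_right)
qed

lemma sum_exp_le_of_centered:
  fixes x :: "'a \<Rightarrow> real"
  assumes "finite R" "(\<Sum>h\<in>R. x h) = 0" "\<And>h. h \<in> R \<Longrightarrow> x h \<le> 1"
    and "(\<Sum>h\<in>R. (x h)^2) \<le> real (card R) * s"
  shows "(\<Sum>h\<in>R. exp (x h)) \<le> real (card R) * exp s"
proof -
  have "(\<Sum>h\<in>R. exp (x h)) \<le> (\<Sum>h\<in>R. 1 + x h + (x h)^2)"
    by (intro sum_mono exp_le_one_plus_x_plus_square assms(3))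
  also have "\<dots> = real (card R) + (\<Sum>h\<in>R. (x h)^2)"
    using assms(2) by (simp add: sum.distrib)
  also have "\<dots> \<le> real (card R) * (1 + s)"
    using assms(4) by (simp add: algebra_simps)
  also have "\<dots> \<le> real (card R) * exp s"
    by (intro mult_left_mono) (simp_all add: exp_ge_add_one_self add.commute)
  finally show ?thesis .
qed

lemma sum_exp_family_density_remove_point_le:
  assumes R: "finite R" "l + 2 \<le> card R"
    and \<theta>: "\<theta> \<ge> 0" "\<theta> * real l \<le> real (card R) - real l"
  shows "(\<Sum>h\<in>R. exp (- \<theta> * family_density G l (R - {h})))
           \<le> real (card R) * exp (- \<theta> * family_density G l R
               + \<theta>^2 * (real l / (real (card R) - real l - 1) - real l / (real (card R) - real l)))"
proof -
  define n where "n = card R"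
  define x where "x h = \<theta> * (family_density G l R - family_density G l (R - {h}))" for h
  define v where "v = real l / (real n - real l - 1) - real l / (real n - real l)"
  have pos: "real n - real l - 1 > 0" "real n - 1 > 0"
    using R(2) by (simp_all add: n_def)
  have "(\<Sum>h\<in>R. x h) = 0"
    using sum_family_density_remove_point[OF R(1), of l G] R(2)
    by (simp add: x_def sum_distrib_left[symmetric] sum_subtractf)
  moreover have "x h \<le> 1" if "h \<in> R" for h
  proof -
    have "x h \<le> \<theta> * (real l / (real n - real l))"
      unfolding x_def n_def using family_density_remove_point_le[OF R(1) that, of l G] R(2) \<theta>(1)
      by (intro mult_left_mono) simp_all
    also have "\<dots> \<le> 1"
      using \<theta>(2) pos by (simp add: n_def field_simps)
    finally show ?thesis .
  qed
  moreover have "(\<Sum>h\<in>R. (x h)^2) \<le> real n * (\<theta>^2 * v)"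
  proof -
    have "(\<Sum>h\<in>R. (x h)^2)
        = \<theta>^2 * (\<Sum>h\<in>R. (family_density G l R - family_density G l (R - {h}))^2)"
      by (simp add: x_def power_mult_distrib sum_distrib_left)
    also have "\<dots> \<le> \<theta>^2 * (real n * real l / ((real n - real l) * (real n - 1)))"
      using sum_square_family_density_remove_point_le[OF R] by (intro mult_left_mono) (simp_all add: n_def)
    also have "\<dots> \<le> \<theta>^2 * (real n * real l / ((real n - real l) * (real n - real l - 1)))"
      using pos by (intro mult_left_mono divide_left_mono) (simp_all add: mult_pos_pos)
    also have "\<dots> = real n * (\<theta>^2 * v)"
      using pos by (simp add: v_def field_simps)
    finally show ?thesis .
  qed
  ultimately have "(\<Sum>h\<in>R. exp (x h)) \<le> real n * exp (\<theta>^2 * v)"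
    using sum_exp_le_of_centered[OF R(1)] by (simp add: n_def)
  have "(\<Sum>h\<in>R. exp (- \<theta> * family_density G l (R - {h})))
      = exp (- \<theta> * family_density G l R) * (\<Sum>h\<in>R. exp (x h))"
    by (simp add: sum_distrib_left x_def algebra_simps flip: exp_add)
  also have "\<dots> \<le> exp (- \<theta> * family_density G l R) * (real n * exp (\<theta>^2 * v))"
    using \<open>(\<Sum>h\<in>R. exp (x h)) \<le> real n * exp (\<theta>^2 * v)\<close> by (intro mult_left_mono) simp_all
  also have "\<dots> = real n * exp (- \<theta> * family_density G l R + \<theta>^2 * v)"
    by (simp only: exp_add mult_ac)
  finally show ?thesis
    by (simp add: v_def n_def)
qed

lemma subsets_of_size_Suc_containing:
  assumes "finite R" "h \<in> R"
  shows "{K \<in> subsets_of_size R (Suc k). h \<in> K} = insert h ` subsets_of_size (R - {h}) k"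
proof (intro equalityI subsetI)
  fix K assume K: "K \<in> {K \<in> subsets_of_size R (Suc k). h \<in> K}"
  then have "finite K"
    using assms(1) finite_subset by (auto simp: subsets_of_size_def)
  with K have "K - {h} \<in> subsets_of_size (R - {h}) k"
    by (auto simp: subsets_of_size_def)
  moreover have "K = insert h (K - {h})"
    using K by auto
  ultimately show "K \<in> insert h ` subsets_of_size (R - {h}) k"
    by blast
next
  fix K assume "K \<in> insert h ` subsets_of_size (R - {h}) k"
  then obtain K' where K': "K' \<subseteq> R - {h}" "card K' = k" "K = insert h K'"
    by (auto simp: subsets_of_size_def)
  moreover have "finite K'" "h \<notin> K'"
    using K'(1) assms(1) finite_subset by auto
  ultimately show "K \<in> {K \<in> subsets_of_size R (Suc k). h \<in> K}"
    using assms(2) by (auto simp: subsets_of_size_def)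
qed

lemma sum_subsets_of_size_Suc:
  fixes f :: "'a set \<Rightarrow> 'b::comm_semiring_1"
  assumes R: "finite R"
  shows "of_nat (Suc k) * (\<Sum>K\<in>subsets_of_size R (Suc k). f K)
           = (\<Sum>h\<in>R. \<Sum>K\<in>subsets_of_size (R - {h}) k. f (insert h K))"
proof -
  have "{h \<in> R. h \<in> K} = K \<and> card K = Suc k" if "K \<in> subsets_of_size R (Suc k)" for K
    using that by (auto simp: subsets_of_size_def)
  then have "of_nat (Suc k) * (\<Sum>K\<in>subsets_of_size R (Suc k). f K)
      = (\<Sum>K\<in>subsets_of_size R (Suc k). \<Sum>h\<in>{h \<in> R. h \<in> K}. f K)"
    unfolding sum_distrib_left by (intro sum.cong refl) simp
  also have "\<dots> = (\<Sum>h\<in>R. \<Sum>K\<in>{K \<in> subsets_of_size R (Suc k). h \<in> K}. f K)"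
    using R by (intro sum.swap_restrict) simp_all
  also have "\<dots> = (\<Sum>h\<in>R. \<Sum>K\<in>subsets_of_size (R - {h}) k. f (insert h K))"
  proof (rule sum.cong[OF refl])
    fix h assume h: "h \<in> R"
    have "inj_on (insert h) (subsets_of_size (R - {h}) k)"
      by (intro inj_onI) (auto simp: subsets_of_size_def insert_ident)
    then show "(\<Sum>K\<in>{K \<in> subsets_of_size R (Suc k). h \<in> K}. f K)
        = (\<Sum>K\<in>subsets_of_size (R - {h}) k. f (insert h K))"
      unfolding subsets_of_size_Suc_containing[OF R h] by (simp add: sum.reindex)
  qed
  finally show ?thesis .
qed

text \<open>The exponents l/(n - l - 1) - l/(n - l) of the single deletions telescope.\<close>

lemma sum_exp_family_density_remove_subsets_le:
  assumes "finite R" "k + l + 1 \<le> card R"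
    and "\<theta> \<ge> 0" "\<theta> * real l \<le> real (card R) - real k - real l"
  shows "(\<Sum>K\<in>subsets_of_size R k. exp (- \<theta> * family_density G l (R - K)))
           \<le> real (card R choose k) * exp (- \<theta> * family_density G l R
               + \<theta>^2 * (real l / (real (card R) - real k - real l) - real l / (real (card R) - real l)))"
  using assms
proof (induction k arbitrary: R)
  case 0
  then have "subsets_of_size R 0 = {{}}"
    by (auto simp: subsets_of_size_def dest: finite_subset)
  then show ?case
    by simp
next
  case (Suc k)
  define n where "n = card R"
  define Q where "Q = real l / (real n - 1 - real k - real l) - real l / (real n - 1 - real l)"
  define v where "v = real l / (real n - real l - 1) - real l / (real n - real l)"
  have n: "Suc k + l + 1 \<le> n"
    using Suc.prems(2) by (simp add: n_def)
  have IH: "(\<Sum>K\<in>subsets_of_size (R - {h}) k. exp (- \<theta> * family_density G l (R - {h} - K)))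
      \<le> real ((n - 1) choose k) * exp (- \<theta> * family_density G l (R - {h}) + \<theta>^2 * Q)" if "h \<in> R" for h
  proof -
    have "card (R - {h}) = n - 1"
      using Suc.prems(1) that by (simp add: n_def card_Diff_singleton)
    then show ?thesis
      using Suc.IH[of "R - {h}"] Suc.prems n by (simp add: Q_def n_def of_nat_diff)
  qed
  have "real (Suc k) * (\<Sum>K\<in>subsets_of_size R (Suc k). exp (- \<theta> * family_density G l (R - K)))
      = (\<Sum>h\<in>R. \<Sum>K\<in>subsets_of_size (R - {h}) k. exp (- \<theta> * family_density G l (R - {h} - K)))"
    using sum_subsets_of_size_Suc[OF Suc.prems(1)] by (simp add: Diff_insert2[symmetric])
  also have "\<dots> \<le> (\<Sum>h\<in>R. real ((n - 1) choose k) * exp (- \<theta> * family_density G l (R - {h}) + \<theta>^2 * Q))"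
    by (intro sum_mono IH)
  also have "\<dots> = real ((n - 1) choose k) * exp (\<theta>^2 * Q) * (\<Sum>h\<in>R. exp (- \<theta> * family_density G l (R - {h})))"
    by (simp only: sum_distrib_left exp_add mult_ac)
  also have "\<dots> \<le> real ((n - 1) choose k) * exp (\<theta>^2 * Q) * (real n * exp (- \<theta> * family_density G l R + \<theta>^2 * v))"
    using sum_exp_family_density_remove_point_le[OF Suc.prems(1), of l \<theta> G] Suc.prems n
    by (intro mult_left_mono) (simp_all add: n_def v_def)
  also have "\<dots> = real (Suc k) * (real (n choose Suc k) * exp (- \<theta> * family_density G l R + \<theta>^2 * (Q + v)))"
  proof -
    have "real n * real ((n - 1) choose k) = real (Suc k) * real (n choose Suc k)"
      using binomial_absorption[of k n] by (metis of_nat_mult)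
    moreover have "exp (\<theta>^2 * Q) * exp (- \<theta> * family_density G l R + \<theta>^2 * v)
        = exp (- \<theta> * family_density G l R + \<theta>^2 * (Q + v))"
      by (simp add: algebra_simps flip: exp_add)
    ultimately show ?thesis
      by (metis mult.assoc mult.commute)
  qed
  finally have "(\<Sum>K\<in>subsets_of_size R (Suc k). exp (- \<theta> * family_density G l (R - K)))
      \<le> real (n choose Suc k) * exp (- \<theta> * family_density G l R + \<theta>^2 * (Q + v))"
    by (simp only: mult_le_cancel_left_pos of_nat_0_less_iff zero_less_Suc)
  moreover have "Q + v = real l / (real n - real (Suc k) - real l) - real l / (real n - real l)"
  proof -
    have denominators: "real n - real l - 1 = real n - 1 - real l"
      "real n - real (Suc k) - real l = real n - 1 - real k - real l"
      by simp_all
    show ?thesis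
      unfolding Q_def v_def denominators by linarith
  qed
  ultimately show ?case
    by (simp add: n_def)
qed

lemma card_family_density_drop_le:
  assumes "finite R" "k + l + 1 \<le> card R"
    and "\<theta> \<ge> 0" "\<theta> * real l \<le> real (card R) - real k - real l"
  shows "real (card {K \<in> subsets_of_size R k. family_density G l (R - K) < family_density G l R - \<epsilon>})
           \<le> real (card R choose k) * exp (- \<theta> * \<epsilon>
               + \<theta>^2 * (real l / (real (card R) - real k - real l) - real l / (real (card R) - real l)))"
proof -
  define Q where "Q = real l / (real (card R) - real k - real l) - real l / (real (card R) - real l)"
  define d where "d = family_density G l R"
  let ?E = "{K \<in> subsets_of_size R k. family_density G l (R - K) < d - \<epsilon>}"
  have "real (card ?E) * exp (- \<theta> * (d - \<epsilon>)) = (\<Sum>K\<in>?E. exp (- \<theta> * (d - \<epsilon>)))"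
    by simp
  also have "\<dots> \<le> (\<Sum>K\<in>?E. exp (- \<theta> * family_density G l (R - K)))"
    using assms(3) by (intro sum_mono) (simp add: mult_left_mono)
  also have "\<dots> \<le> (\<Sum>K\<in>subsets_of_size R k. exp (- \<theta> * family_density G l (R - K)))"
    using assms(1) by (intro sum_mono2) auto
  also have "\<dots> \<le> real (card R choose k) * exp (- \<theta> * d + \<theta>^2 * Q)"
    using sum_exp_family_density_remove_subsets_le[OF assms] by (simp add: Q_def d_def)
  finally have "real (card ?E) \<le> real (card R choose k) * (exp (- \<theta> * d + \<theta>^2 * Q) / exp (- \<theta> * (d - \<epsilon>)))"
    by (simp add: pos_le_divide_eq)
  also have "\<dots> = real (card R choose k) * exp ((- \<theta> * d + \<theta>^2 * Q) - (- \<theta> * (d - \<epsilon>)))"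
    by (simp only: exp_diff)
  also have "(- \<theta> * d + \<theta>^2 * Q) - (- \<theta> * (d - \<epsilon>)) = - \<theta> * \<epsilon> + \<theta>^2 * Q"
    by (simp add: algebra_simps)
  finally show ?thesis
    by (simp add: Q_def d_def)
qed

section \<open>The tail bound\<close>

lemma ksubsets_eq_subsets_of_size: "ksubsets m k = subsets_of_size {1..m} k"
  by (simp add: ksubsets_def subsets_of_size_def)

lemma family_density_ksubsets:
  assumes "G \<subseteq> ksubsets m l"
  shows "family_density G l {1..m} = real (card G) / real (m choose l)"
  using assms by (simp add: family_density_def ksubsets_eq_subsets_of_size Int_absorb2)

lemma unif_prob_avoiding_eq:
  assumes G: "G \<subseteq> ksubsets m l" and m: "l' + l \<le> m"
  shows "unif_prob (ksubsets m l') (\<lambda>H. real (card (avoiding G H)) < c * real ((m - l') choose l))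
           = real (card {H \<in> subsets_of_size {1..m} l'. family_density G l ({1..m} - H) < c})
             / real (m choose l')"
proof -
  let ?\<Omega> = "subsets_of_size {1..m} l'"
  have event: "real (card (avoiding G H)) < c * real ((m - l') choose l)
      \<longleftrightarrow> family_density G l ({1..m} - H) < c" if "H \<in> ?\<Omega>" for H
  proof -
    have "avoiding G H = G \<inter> subsets_of_size ({1..m} - H) l"
      using G by (auto simp: avoiding_def ksubsets_eq_subsets_of_size subsets_of_size_def)
    moreover have "card ({1..m} - H) = m - l'"
      using that by (auto simp: subsets_of_size_def card_Diff_subset finite_subset)
    moreover have "real ((m - l') choose l) > 0"
      using m by simp
    ultimately show ?thesis
      by (simp add: family_density_def divide_less_eq)
  qed
  have "card ?\<Omega> = m choose l'"
    by (simp add: card_subsets_of_size)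
  then have "?\<Omega> \<noteq> {}"
    using m by auto
  then have "unif_prob ?\<Omega> (\<lambda>H. real (card (avoiding G H)) < c * real ((m - l') choose l))
      = real (card (?\<Omega> \<inter> {H. real (card (avoiding G H)) < c * real ((m - l') choose l)}))
        / real (card ?\<Omega>)"
    unfolding unif_prob_def by (simp add: measure_pmf_of_set)
  also have "?\<Omega> \<inter> {H. real (card (avoiding G H)) < c * real ((m - l') choose l)}
      = {H \<in> ?\<Omega>. family_density G l ({1..m} - H) < c}"
    using event by blast
  finally show ?thesis
    by (simp add: ksubsets_eq_subsets_of_size card_subsets_of_size)
qed

text \<open>The term sqrt (8 ln 2) in \<epsilon> is only used to force t > 4.\<close>

lemma chernoff_parameters:
  fixes m l l' t :: nat and a :: real
  assumes "l > 0" "t * l + l' \<le> m" "a > 0" "2 * a + sqrt (8 * ln 2) < sqrt (real t)"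
  shows "real t > 4" and "l' + l + 1 \<le> m"
    and "a * sqrt (real t) * real l \<le> real m - real l' - real l"
    and "real l / (real m - real l' - real l) - real l / (real m - real l) \<le> 1 / (real t - 1)"
proof -
  have "sqrt (8 * ln 2) < sqrt (real t)"
    using assms(3,4) by linarith
  then show t: "real t > 4"
    using ln2_ge_two_thirds by simp
  have "(real t - 1) * real l \<le> real m - real l' - real l"
    using assms(2) by (simp add: algebra_simps flip: of_nat_mult of_nat_add)
  moreover have "(real t - 1) * real l \<ge> 1"
  proof -
    have "2 * real l \<le> real t * real l"
      using t by (intro mult_right_mono) simp_all
    moreover have "real l \<ge> 1"
      using assms(1) by simp
    ultimately show ?thesis
      unfolding left_diff_distrib by linarith
  qed
  ultimately show "l' + l + 1 \<le> m"
    by linarith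
  have "sqrt (8 * ln 2) \<ge> 0"
    by simp
  then have "2 * a < sqrt (real t)"
    using assms(4) by linarith
  then have "2 * (a * sqrt (real t)) < sqrt (real t) * sqrt (real t)"
    using mult_strict_right_mono[of "2 * a" "sqrt (real t)" "sqrt (real t)"] t by (simp add: mult_ac)
  then have "a * sqrt (real t) \<le> real t - 1"
    using t by simp
  then have "a * sqrt (real t) * real l \<le> (real t - 1) * real l"
    by (intro mult_right_mono) simp_all
  then show "a * sqrt (real t) * real l \<le> real m - real l' - real l"
    using \<open>(real t - 1) * real l \<le> _\<close> by linarith
  have "real l / (real m - real l' - real l) \<le> real l / ((real t - 1) * real l)"
    using \<open>(real t - 1) * real l \<le> _\<close> \<open>(real t - 1) * real l \<ge> 1\<close>
    by (intro divide_left_mono) simp_all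
  moreover have "real l / (real m - real l) \<ge> 0"
    using \<open>l' + l + 1 \<le> m\<close> by simp
  ultimately show "real l / (real m - real l' - real l) - real l / (real m - real l) \<le> 1 / (real t - 1)"
    using assms(1) by simp
qed

lemma chernoff_exponent_le:
  fixes a t q :: real
  assumes "a > 0" "t > 4" "2 * a + sqrt (8 * ln 2) < sqrt t" "q \<le> 1 / (t - 1)"
  shows "- (a * sqrt t) * ((2 * a + sqrt (8 * ln 2)) / sqrt t) + (a * sqrt t)^2 * q \<le> - (a^2) / 2"
proof -
  have "- (a * sqrt t) * ((2 * a + sqrt (8 * ln 2)) / sqrt t) = - 2 * a^2 - a * sqrt (8 * ln 2)"
    using assms(2) by (simp add: field_simps power2_eq_square)
  moreover have "(a * sqrt t)^2 * q \<le> a^2 * (t / (t - 1))"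
    using assms(2,4) mult_left_mono[OF assms(4), of "a^2 * t"]
    by (simp add: power_mult_distrib field_simps)
  moreover have "a^2 * (t / (t - 1)) \<le> a^2 * (3 / 2)"
    using assms(2) by (intro mult_left_mono) (simp_all add: divide_le_eq)
  moreover have "a * sqrt (8 * ln 2) \<ge> 0"
    using assms(1) by simp
  ultimately show ?thesis
    by linarith
qed

lemma family_density_drop_below_empty:
  assumes "finite R" "\<epsilon> \<ge> 1"
  shows "{K \<in> subsets_of_size R k. family_density G l (R - K) < family_density G l R - \<epsilon>} = {}"
proof -
  have "family_density G l R - \<epsilon> \<le> family_density G l (R - K)" for K
    using family_density_le_1[OF assms(1), of G l] family_density_nonneg[of G l "R - K"] assms(2)
    by linarith
  then show ?thesis
    by (simp add: not_less)
qed

lemma card_family_density_drop_interval_le: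
  fixes m l l' t :: nat and a :: real
  assumes "l > 0" "t * l + l' \<le> m" "a > 0" "2 * a + sqrt (8 * ln 2) < sqrt (real t)"
  defines "\<epsilon> \<equiv> (2 * a + sqrt (8 * ln 2)) / sqrt (real t)"
  shows "real (card {H \<in> subsets_of_size {1..m} l'.
             family_density G l ({1..m} - H) < family_density G l {1..m} - \<epsilon>})
           \<le> real (m choose l') * exp (- (a^2) / 2)"
proof -
  note params = chernoff_parameters[OF assms(1-4)]
  have "real (card {H \<in> subsets_of_size {1..m} l'.
             family_density G l ({1..m} - H) < family_density G l {1..m} - \<epsilon>})
      \<le> real (m choose l') * exp (- (a * sqrt (real t)) * \<epsilon>
        + (a * sqrt (real t))^2 * (real l / (real m - real l' - real l) - real l / (real m - real l)))"
    using card_family_density_drop_le[of "{1..m}" l' l "a * sqrt (real t)" G \<epsilon>] params(2,3) assms(3)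
    by simp
  also have "\<dots> \<le> real (m choose l') * exp (- (a^2) / 2)"
    using chernoff_exponent_le[OF assms(3) params(1) assms(4) params(4)] unfolding \<epsilon>_def
    by (intro mult_left_mono) simp_all
  finally show ?thesis .
qed

theorem mainTheorem6:
  fixes m l l' t :: nat and a :: real and G :: "nat set set"
  assumes "m > 0" "l > 0" "l' > 0" "t > 0"
    and "m \<ge> t * l + l'"
    and "a > 0"
    and "G \<subseteq> ksubsets m l"
  shows "let \<epsilon> = (2 * a + sqrt (8 * ln 2)) / sqrt (real t);
             \<alpha> = real (card G) / real (m choose l)
         in unif_prob (ksubsets m l')
              (\<lambda>H. real (card (avoiding G H)) < (\<alpha> - \<epsilon>) * real ((m - l') choose l))
            < 2 * exp (- (a^2) / 2)"
proof -
  define \<epsilon> where "\<epsilon> = (2 * a + sqrt (8 * ln 2)) / sqrt (real t)"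
  define \<alpha> where "\<alpha> = real (card G) / real (m choose l)"
  define E where "E = {H \<in> subsets_of_size {1..m} l'. family_density G l ({1..m} - H) < \<alpha> - \<epsilon>}"
  have \<alpha>: "\<alpha> = family_density G l {1..m}"
    using family_density_ksubsets[OF assms(7)] by (simp add: \<alpha>_def)
  have "l \<le> t * l"
    using assms(4) by simp
  then have "l' + l \<le> m"
    using assms(5) by linarith
  have "real (card E) \<le> real (m choose l') * exp (- (a^2) / 2)"
  proof (cases "2 * a + sqrt (8 * ln 2) < sqrt (real t)")
    case True
    then show ?thesis
      using card_family_density_drop_interval_le[OF assms(2,5,6) True] by (simp add: E_def \<alpha> \<epsilon>_def)
  next
    case False
    then have "\<epsilon> \<ge> 1"
      using assms(4) by (simp add: \<epsilon>_def)
    then have "E = {}"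
      unfolding E_def \<alpha> by (rule family_density_drop_below_empty[OF finite_atLeastAtMost])
    then show ?thesis
      by simp
  qed
  then have "real (card E) / real (m choose l') \<le> exp (- (a^2) / 2)"
    using \<open>l' + l \<le> m\<close> by (simp add: divide_le_eq mult.commute)
  also have "\<dots> < 2 * exp (- (a^2) / 2)"
    by simp
  finally show ?thesis
    using unif_prob_avoiding_eq[OF assms(7) \<open>l' + l \<le> m\<close>] by (simp add: E_def \<epsilon>_def \<alpha>_def)
qed

end
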